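(* For all sufficiently large $n$ the following holds. Let $m=cn$ where $10^4\le c\le n/10^{10}$, and let $\beta^*=\max\{e^{-c/6},1/n\}$. Then with probability at least $1-n^{-15}$ over $G\sim\mathcal{G}_{n,m}$, for all $\beta$ with $\beta^*\le\beta\le 1$, the graph $G$ is $(\beta,\beta/240)$-asymmetric.
   Context: $\mathcal{G}_{n,m}$ is the uniform distribution over simple graphs on $n$ vertices with exactly $m$ edges. For a graph $G=(V,E)$ and a permutation $\pi$ of $V$, $\mathrm{AUT}(G;\pi)=|\{e\in E:\pi(e)\in E\}|/|E|$. A graph $G$ is $(\beta,\gamma)$-asymmetric if every permutation $\pi$ of $V(G)$ having at most a $(1-\beta)$ fraction of the vertices as fixed points satisfies $\mathrm{AUT}(G;\pi)<1-\gamma$. *)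

theory Defs
  imports "HOL-Analysis.Analysis" "HOL-Combinatorics.Permutations"
begin

text \<open>Simple graphs on vertex set {0..<n}: an edge set is a set of 2-element subsets.\<close>

definition all_edges :: "nat \<Rightarrow> nat set set" where
  "all_edges n = {e. e \<subseteq> {0..<n} \<and> card e = 2}"

text \<open>Support of G(n,m): all simple graphs on {0..<n} with exactly m edges (uniform measure).\<close>
definition graphs_nm :: "nat \<Rightarrow> nat \<Rightarrow> nat set set set" where
  "graphs_nm n m = {E. E \<subseteq> all_edges n \<and> card E = m}"

definition AUT :: "nat set set \<Rightarrow> (nat \<Rightarrow> nat) \<Rightarrow> real" where
  "AUT E \<pi> = real (card {e \<in> E. \<pi> ` e \<in> E}) / real (card E)"

definition fixed_points :: "nat \<Rightarrow> (nat \<Rightarrow> nat) \<Rightarrow> nat set" where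
  "fixed_points n \<pi> = {v \<in> {0..<n}. \<pi> v = v}"

definition asymmetric :: "nat \<Rightarrow> nat set set \<Rightarrow> real \<Rightarrow> real \<Rightarrow> bool" where
  "asymmetric n E \<beta> \<gamma> \<longleftrightarrow>
     (\<forall>\<pi>. \<pi> permutes {0..<n} \<and> real (card (fixed_points n \<pi>)) \<le> (1 - \<beta>) * real n
          \<longrightarrow> AUT E \<pi> < 1 - \<gamma>)"

definition prob_Gnm :: "nat \<Rightarrow> nat \<Rightarrow> (nat set set \<Rightarrow> bool) \<Rightarrow> real" where
  "prob_Gnm n m P = real (card {E \<in> graphs_nm n m. P E}) / real (card (graphs_nm n m))"

end

theory Submission
  imports Defs "HOL-Real_Asymp.Real_Asymp"
begin

text \<open>
  If \<open>G\<close> is not \<open>(\<beta>, \<beta>/240)\<close>-asymmetric, some permutation moves every vertex of a set \<open>S\<close>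
  with \<open>card S \<ge> \<beta> n \<ge> max (exp (- c / 6) n) 1\<close> and breaks at most \<open>\<beta> m / 240 \<le> c k / 240\<close>
  edges, \<open>k = card S\<close>. Fix \<open>S\<close> and the derangement \<open>\<pi>\<close> of \<open>S\<close>. The expected number \<open>\<mu>\<close> of
  edges meeting \<open>S\<close> is at least \<open>c k\<close>. Either fewer than \<open>\<mu> / 120\<close> edges meet \<open>S\<close>, a
  hypergeometric lower tail of probability at most \<open>exp (- 0.93 \<mu>)\<close>; or many edges meeting \<open>S\<close>
  are mapped by \<open>\<pi>\<close> onto other edges, and then \<open>G\<close> contains \<open>t \<approx> c k / 900\<close> edges together
  with their \<open>t\<close> distinct images, which has probability at most \<open>(d choose t) p ^ (2 t)\<close>.
  Union bounds over the \<open>n choose k\<close> supports, the \<open>k!\<close> derangements and the \<open>n + 1\<close> values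
  of \<open>k\<close> leave a failure probability of at most \<open>2 (n + 1) n powr (-17) \<le> n powr (-15)\<close>.
\<close>

section \<open>Binomial coefficients and counting subsets\<close>

lemma real_card_UN_le:
  assumes "finite I"
  shows "real (card (\<Union>i\<in>I. A i)) \<le> (\<Sum>i\<in>I. real (card (A i)))"
  using card_UN_le[OF assms, of A] by (simp flip: of_nat_sum)

lemma real_binomial_Suc_times:
  "real (n choose Suc k) * Suc k = real (n choose k) * (real n - real k)"
proof (cases "k \<le> n")
  case True
  have "(n - k) * (n choose k) = Suc k * (n choose Suc k)"
    using binomial_absorb_comp[of n k] binomial_absorption[of k n] by simp
  then have "real (n - k) * real (n choose k) = real (Suc k) * real (n choose Suc k)"
    by (simp only: of_nat_mult[symmetric])
  then show ?thesis using True by (simp add: of_nat_diff algebra_simps)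
next
  case False
  then show ?thesis by (simp add: binomial_eq_0)
qed

lemma binomial_diff_le_ratio_power:
  assumes "r \<le> m" "m \<le> N"
  shows "real ((N - r) choose (m - r)) \<le> (real m / real N) ^ r * real (N choose m)"
  using assms
proof (induction r arbitrary: N m)
  case 0
  then show ?case by simp
next
  case (Suc r)
  obtain N' m' where N: "N = Suc N'" and M: "m = Suc m'"
    using Suc.prems by (metis Suc_le_D le_trans)
  have IH: "real ((N' - r) choose (m' - r)) \<le> (real m' / real N') ^ r * real (N' choose m')"
    using Suc.IH[of m' N'] Suc.prems N M by simp
  have absorb: "real (N' choose m') = real (N choose m) * real m / real N"
  proof -
    have "real (Suc m' * (Suc N' choose Suc m')) = real (Suc N' * (N' choose m'))"
      using Suc_times_binomial[of m' N'] by presburger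
    then have "real m * real (N choose m) = real N * real (N' choose m')"
      unfolding N M of_nat_mult by simp
    then show ?thesis using N by (simp add: field_simps)
  qed
  have ratio: "real m' / real N' \<le> real m / real N"
    using Suc.prems N M by (cases "N' = 0") (simp_all add: field_simps)
  have "real ((N - Suc r) choose (m - Suc r)) = real ((N' - r) choose (m' - r))"
    using N M by simp
  also have "\<dots> \<le> (real m' / real N') ^ r * real (N' choose m')" by (rule IH)
  also have "\<dots> \<le> (real m / real N) ^ r * real (N' choose m')"
    by (intro mult_right_mono power_mono ratio) auto
  also have "\<dots> = (real m / real N) ^ Suc r * real (N choose m)"
    by (simp add: absorb field_simps)
  finally show ?case .
qed

lemma binomial_le_ratio_power:
  assumes "a \<le> b" "0 < b"
  shows "real (a choose s) \<le> (real a / real b) ^ s * real (b choose s)"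
proof (induction s)
  case 0
  then show ?case by simp
next
  case (Suc s)
  show ?case
  proof (cases "s \<le> a")
    case False
    then show ?thesis using assms by (simp add: binomial_eq_0 del: binomial_eq_0_iff)
  next
    case True
    define q where "q = real a / real b"
    have q: "0 \<le> q" "real a - real s \<le> q * (real b - real s)"
      using assms True by (simp_all add: q_def field_simps mult_right_mono)
    have "real (a choose Suc s) * Suc s = real (a choose s) * (real a - real s)"
      by (rule real_binomial_Suc_times)
    also have "\<dots> \<le> (q ^ s * real (b choose s)) * (q * (real b - real s))"
      using Suc.IH True q by (intro mult_mono) (auto simp: q_def)
    also have "\<dots> = q ^ Suc s * (real (b choose s) * (real b - real s))"
      by (simp add: algebra_simps)
    also have "\<dots> = q ^ Suc s * real (b choose Suc s) * Suc s"
      by (simp only: real_binomial_Suc_times[of b s, symmetric] mult.assoc)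
    finally show ?thesis unfolding q_def by (rule mult_right_le_imp_le) simp
  qed
qed

lemma card_subsets_Int_eq:
  assumes U: "finite U" and D: "D \<subseteq> U" and J: "J \<subseteq> D" and j: "card J \<le> m"
  shows "card {E. E \<subseteq> U \<and> card E = m \<and> E \<inter> D = J} = (card U - card D) choose (m - card J)"
proof -
  have fD: "finite D" using finite_subset[OF D U] .
  have fJ: "finite J" using finite_subset[OF J fD] .
  have "bij_betw (\<lambda>E. E - J) {E. E \<subseteq> U \<and> card E = m \<and> E \<inter> D = J}
                             {B. B \<subseteq> U - D \<and> card B = m - card J}"
  proof (rule bij_betw_byWitness[where f'="\<lambda>B. B \<union> J"])
    show "\<forall>E\<in>{E. E \<subseteq> U \<and> card E = m \<and> E \<inter> D = J}. E - J \<union> J = E" by auto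
    show "\<forall>B\<in>{B. B \<subseteq> U - D \<and> card B = m - card J}. B \<union> J - J = B" using J by auto
    show "(\<lambda>E. E - J) ` {E. E \<subseteq> U \<and> card E = m \<and> E \<inter> D = J}
          \<subseteq> {B. B \<subseteq> U - D \<and> card B = m - card J}"
    proof (rule image_subsetI)
      fix E assume "E \<in> {E. E \<subseteq> U \<and> card E = m \<and> E \<inter> D = J}"
      then have E: "E \<subseteq> U" "E \<inter> D = J" "m = card E" by auto
      then have "card (E - J) = card E - card J"
        by (metis card_Diff_subset U fJ finite_subset Int_lower1)
      then show "E - J \<in> {B. B \<subseteq> U - D \<and> card B = m - card J}" using E by auto
    qed
    show "(\<lambda>B. B \<union> J) ` {B. B \<subseteq> U - D \<and> card B = m - card J}
          \<subseteq> {E. E \<subseteq> U \<and> card E = m \<and> E \<inter> D = J}"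
    proof safe
      fix B assume B: "B \<subseteq> U - D" "card B = m - card J"
      then have "finite B" using U finite_subset by blast
      moreover have "B \<inter> J = {}" using B J by auto
      ultimately show "card (B \<union> J) = m" using B j fJ by (simp add: card_Un_disjoint)
    qed (use D J in auto)
  qed
  then have "card {E. E \<subseteq> U \<and> card E = m \<and> E \<inter> D = J} = card {B. B \<subseteq> U - D \<and> card B = m - card J}"
    by (rule bij_betw_same_card)
  also have "\<dots> = card (U - D) choose (m - card J)" using U by (simp add: n_subsets)
  also have "card (U - D) = card U - card D" using D fD by (simp add: card_Diff_subset)
  finally show ?thesis .
qed

lemma card_subsets_superset_le:
  assumes U: "finite U" and m: "m \<le> card U" and R: "finite R"
  shows "real (card {E. E \<subseteq> U \<and> card E = m \<and> R \<subseteq> E})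
     \<le> (real m / real (card U)) ^ card R * real (card {E. E \<subseteq> U \<and> card E = m})"
proof (cases "R \<subseteq> U \<and> card R \<le> m")
  case True
  have "{E. E \<subseteq> U \<and> card E = m \<and> R \<subseteq> E} = {E. E \<subseteq> U \<and> card E = m \<and> E \<inter> R = R}"
    by blast
  then have "real (card {E. E \<subseteq> U \<and> card E = m \<and> R \<subseteq> E})
           = real ((card U - card R) choose (m - card R))"
    using card_subsets_Int_eq[OF U _ order_refl] True by simp
  also have "\<dots> \<le> (real m / real (card U)) ^ card R * real (card U choose m)"
    using True m by (intro binomial_diff_le_ratio_power) auto
  finally show ?thesis using U by (simp add: n_subsets)
next
  case False
  have "card R \<le> card E" if "E \<subseteq> U" "R \<subseteq> E" for E
    using U that by (meson card_mono finite_subset)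
  then have empty: "{E. E \<subseteq> U \<and> card E = m \<and> R \<subseteq> E} = {}"
    using False by auto
  show ?thesis unfolding empty by simp
qed

lemma card_subsets_Int_eq_le:
  assumes U: "finite U" and D: "D \<subseteq> U" and J: "J \<subseteq> D" and m: "m \<le> card U"
  shows "real (card {E. E \<subseteq> U \<and> card E = m \<and> E \<inter> D = J})
     \<le> (real m / real (card U)) ^ card J * real (card {E. E \<subseteq> U \<and> card E = m})
        * ((real (card U) - real (card D)) / (real (card U) - real (card J))) ^ (m - card J)"
proof -
  define N d j where "N = card U" and "d = card D" and "j = card J"
  have fD: "finite D" using U D finite_subset by blast
  have jd: "j \<le> d" and dN: "d \<le> N"
    unfolding j_def d_def N_def using J D fD U by (simp_all add: card_mono)
  have G: "card {E. E \<subseteq> U \<and> card E = m} = N choose m" using U N_def by (simp add: n_subsets)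
  show ?thesis
  proof (cases "j \<le> m")
    case False
    have "card (E \<inter> D) \<le> card E" if "E \<subseteq> U" for E
      using U that by (meson card_mono finite_subset Int_lower1)
    then have empty: "{E. E \<subseteq> U \<and> card E = m \<and> E \<inter> D = J} = {}"
      using False j_def by auto
    show ?thesis unfolding empty using jd dN by (simp add: N_def d_def j_def)
  next
    case jm: True
    have count: "card {E. E \<subseteq> U \<and> card E = m \<and> E \<inter> D = J} = (N - d) choose (m - j)"
      using card_subsets_Int_eq[OF U D J] jm N_def d_def j_def by simp
    show ?thesis
    proof (cases "N - j = 0")
      case True
      then have "m = j" "d = N" using jm m jd dN N_def by auto
      then show ?thesis unfolding count G using N_def d_def j_def \<open>N - j = 0\<close> m by simp
    next
      case False
      have "real ((N - d) choose (m - j))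
            \<le> (real (N - d) / real (N - j)) ^ (m - j) * real ((N - j) choose (m - j))"
        using False jd by (intro binomial_le_ratio_power) auto
      also have "\<dots> \<le> (real (N - d) / real (N - j)) ^ (m - j) * ((real m / real N) ^ j * real (N choose m))"
        using jm m N_def by (intro mult_left_mono binomial_diff_le_ratio_power) auto
      finally show ?thesis unfolding count G using jd dN False
        by (simp add: N_def d_def j_def of_nat_diff algebra_simps)
    qed
  qed
qed

lemma card_subsets_small_Int_le:
  assumes U: "finite U" and D: "D \<subseteq> U" and m: "m \<le> card U"
  shows "real (card {E. E \<subseteq> U \<and> card E = m \<and> card (E \<inter> D) < L})
    \<le> (\<Sum>j<L. real (card D choose j) * (real m / real (card U)) ^ j
          * ((real (card U) - real (card D)) / (real (card U) - real j)) ^ (m - j))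
       * real (card {E. E \<subseteq> U \<and> card E = m})"
proof -
  define G where "G = {E. E \<subseteq> U \<and> card E = m}"
  define Sub where "Sub j = {J. J \<subseteq> D \<and> card J = j}" for j
  define exactly where "exactly J = {E. E \<subseteq> U \<and> card E = m \<and> E \<inter> D = J}" for J
  have fD: "finite D" using finite_subset[OF D U] .
  have fSub: "finite (Sub j)" for j unfolding Sub_def using fD by simp
  have "{E. E \<subseteq> U \<and> card E = m \<and> card (E \<inter> D) < L} \<subseteq> (\<Union>j\<in>{..<L}. \<Union>J\<in>Sub j. exactly J)"
    unfolding Sub_def exactly_def by auto
  then have "real (card {E. E \<subseteq> U \<and> card E = m \<and> card (E \<inter> D) < L})
     \<le> real (card (\<Union>j\<in>{..<L}. \<Union>J\<in>Sub j. exactly J))"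
  proof (intro of_nat_mono card_mono)
    show "finite (\<Union>j\<in>{..<L}. \<Union>J\<in>Sub j. exactly J)"
      by (rule finite_subset[of _ "Pow U"]) (use U in \<open>auto simp: exactly_def\<close>)
  qed
  also have "\<dots> \<le> (\<Sum>j<L. real (card (\<Union>J\<in>Sub j. exactly J)))"
    by (rule real_card_UN_le) simp
  also have "\<dots> \<le> (\<Sum>j<L. \<Sum>J\<in>Sub j. real (card (exactly J)))"
    by (intro sum_mono real_card_UN_le fSub)
  also have "\<dots> \<le> (\<Sum>j<L. \<Sum>J\<in>Sub j. (real m / real (card U)) ^ j * real (card G)
        * ((real (card U) - real (card D)) / (real (card U) - real j)) ^ (m - j))"
    using card_subsets_Int_eq_le[OF U D _ m] unfolding Sub_def exactly_def G_def
    by (intro sum_mono) auto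
  also have "\<dots> = (\<Sum>j<L. real (card D choose j) * (real m / real (card U)) ^ j
          * ((real (card U) - real (card D)) / (real (card U) - real j)) ^ (m - j)) * real (card G)"
    using fD by (simp add: Sub_def n_subsets sum_distrib_left sum_distrib_right mult_ac)
  finally show ?thesis unfolding G_def .
qed

lemma large_subset_disjoint_from_image:
  assumes "finite P" "inj g" "\<forall>x\<in>P. g x \<noteq> x"
  shows "\<exists>I \<subseteq> P. card P \<le> 3 * card I \<and> (\<forall>x\<in>I. g x \<notin> I)"
  using assms
proof (induction "card P" arbitrary: P rule: less_induct)
  case less
  show ?case
  proof (cases "P = {}")
    case True
    then show ?thesis by auto
  next
    case False
    then obtain x where x: "x \<in> P" by auto
    \<comment> \<open>Greedily keep \<open>x\<close>, discarding the at most two other elements that conflict with it.\<close>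
    define Q where "Q = P - {x, g x} - {y. g y = x}"
    have preimage: "{y. g y = x} \<subseteq> {inv g x}" using less.prems(2) by (auto simp: inv_f_eq)
    have fQ: "finite Q" using less.prems Q_def by auto
    have "card P \<le> card (Q \<union> ({x, g x} \<union> {y. g y = x}))"
      using fQ preimage finite_subset unfolding Q_def by (intro card_mono) auto
    also have "\<dots> \<le> card Q + (card {x, g x} + card {y. g y = x})"
      by (meson add_left_mono card_Un_le order_trans)
    also have "\<dots> \<le> card Q + 3"
      using card_mono[OF _ preimage] card_insert_le_m1[of 2 "{g x}" x] by simp
    finally have cP: "card P \<le> card Q + 3" .
    have "card Q < card P" unfolding Q_def using x less.prems(1)
      by (intro psubset_card_mono) auto
    then obtain I where I: "I \<subseteq> Q" "card Q \<le> 3 * card I" "\<forall>z\<in>I. g z \<notin> I"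
      using less.hyps[of Q] fQ less.prems Q_def by auto
    have "x \<notin> I" "finite I" using I Q_def fQ finite_subset by auto
    then show ?thesis
      using I Q_def less.prems(3) x cP by (intro exI[of _ "insert x I"]) auto
  qed
qed

lemma sum_subsets_by_card_le:
  assumes SS: "SS \<subseteq> Pow {0..<n}" and B: "0 \<le> B"
    and bound: "\<And>S. S \<in> SS \<Longrightarrow> real (n choose card S) * f (card S) \<le> B"
    and f: "\<And>S. S \<in> SS \<Longrightarrow> 0 \<le> f (card S)"
  shows "(\<Sum>S\<in>SS. f (card S)) \<le> (real n + 1) * B"
proof -
  have fSS: "finite SS" using SS finite_subset by (metis finite_Pow_iff finite_atLeastLessThan)
  have card_le: "card S \<le> n" if "S \<in> SS" for S using that SS card_mono[of "{0..<n}" S] by auto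
  have "card ` SS \<subseteq> {..n}" using card_le by auto
  from sum.group[OF fSS finite_atMost this, where h="\<lambda>S. f (card S)"]
  have "(\<Sum>S\<in>SS. f (card S)) = (\<Sum>k\<in>{..n}. \<Sum>S\<in>{S \<in> SS. card S = k}. f (card S))" by simp
  also have "\<dots> = (\<Sum>k\<in>{..n}. real (card {S \<in> SS. card S = k}) * f k)" by simp
  also have "\<dots> \<le> (\<Sum>k\<in>{..n}. B)"
  proof (intro sum_mono)
    fix k
    show "real (card {S \<in> SS. card S = k}) * f k \<le> B"
    proof (cases "{S \<in> SS. card S = k} = {}")
      case False
      then obtain S where S: "S \<in> SS" "card S = k" by auto
      have "card {S \<in> SS. card S = k} \<le> card {S. S \<subseteq> {0..<n} \<and> card S = k}"
        using SS by (intro card_mono) auto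
      then have "real (card {S \<in> SS. card S = k}) \<le> real (n choose k)"
        by (simp add: n_subsets)
      then show ?thesis using bound[OF S(1)] f[OF S(1)] S(2) by (smt (verit) mult_right_mono)
    next
      case True
      show ?thesis unfolding True using B by simp
    qed
  qed
  finally show ?thesis by (simp add: algebra_simps)
qed

lemma exp_ge_partial_sum:
  fixes x :: real assumes "0 \<le> x"
  shows "(\<Sum>j<K. x^j / fact j) \<le> exp x"
proof -
  have s: "(\<lambda>j. x^j / fact j) sums exp x"
    using exp_converges[of x] by (simp add: divide_inverse mult.commute scaleR_conv_of_real)
  show ?thesis
    by (rule sum_le_suminf[OF sums_summable[OF s], of "{..<K}", unfolded sums_unique[OF s, symmetric]])
       (use assms in auto)
qed

lemma power_self_le_exp_fact: "real t ^ t \<le> exp (real t) * fact t"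
proof -
  have "real t ^ t / fact t \<le> (\<Sum>j<Suc t. real t ^ j / fact j)"
    by (rule member_le_sum) auto
  also have "\<dots> \<le> exp (real t)" by (rule exp_ge_partial_sum) simp
  finally show ?thesis by (simp add: divide_le_eq)
qed

lemma binomial_le_power_div_fact: "real (d choose j) \<le> real d ^ j / fact j"
proof -
  have "real ((d choose j) * fact j) \<le> real (d ^ j)"
    using binomial_fact_pow[of d j] by (simp only: of_nat_le_iff)
  then show ?thesis by (simp add: field_simps)
qed

lemma binomial_le_exp_ratio_power:
  assumes "0 < k"
  shows "real (n choose k) \<le> (exp 1 * real n / real k)^k"
proof -
  have "real (n choose k) \<le> real n ^ k / fact k" by (rule binomial_le_power_div_fact)
  also have "\<dots> \<le> real n ^ k * exp (real k) / real k ^ k"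
  proof -
    have "real k ^ k \<le> exp (real k) * fact k" by (rule power_self_le_exp_fact)
    then have "real k ^ k * real n ^ k \<le> (exp (real k) * fact k) * real n ^ k"
      by (intro mult_right_mono) auto
    then show ?thesis using assms by (simp add: field_simps)
  qed
  also have "\<dots> = (exp 1 * real n / real k)^k"
    by (simp add: power_divide power_mult_distrib exp_of_nat_mult[symmetric])
  finally show ?thesis .
qed

lemma binomial_times_power_le:
  assumes "0 < t"
  shows "real (d choose t) * p^(2*t) \<le> (exp 1 * real d * p^2 / real t)^t"
proof -
  have "real (d choose t) * p^(2*t) \<le> (exp 1 * real d / real t)^t * p^(2*t)"
    using binomial_le_exp_ratio_power[OF assms] by (intro mult_right_mono) auto
  also have "\<dots> = (exp 1 * real d * p^2 / real t)^t"
    by (simp add: power_divide power_mult_distrib power_mult)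
  finally show ?thesis .
qed

lemma real_choose_two: "real (n choose 2) = real n * (real n - 1) / 2"
proof -
  have "even (n * (n - 1))" by (cases "even n") auto
  then have "real (n * (n - 1) div 2) = real (n * (n - 1)) / 2"
    by (simp add: real_of_nat_div)
  then show ?thesis by (cases n) (auto simp: choose_two algebra_simps)
qed

lemma ln_120_le: "ln (120::real) \<le> 5.4"
proof -
  have "(120::real) \<le> (\<Sum>j<7. 5.4 ^ j / fact j)"
    by (simp add: numeral_eq_Suc fact_numeral)
  also have "\<dots> \<le> exp 5.4" by (rule exp_ge_partial_sum) simp
  finally show ?thesis by (metis ln_exp ln_le_cancel_iff exp_gt_zero zero_less_numeral)
qed

lemma ln_20000_le: "ln (20000::real) \<le> 15"
proof -
  have "(2::real)^15 \<le> exp 1 ^ 15"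
    using exp_ge_add_one_self[of 1] by (intro power_mono) auto
  then have "(20000::real) \<le> exp 15" by (simp add: exp_of_nat_mult[symmetric])
  then show ?thesis by (metis ln_exp ln_le_cancel_iff exp_gt_zero zero_less_numeral)
qed

lemma mult_exp_le_powr:
  fixes x B a r y :: real
  assumes "x \<le> exp B" "B + a \<le> r * ln y" "0 < y"
  shows "x * exp a \<le> y powr r"
proof -
  have "x * exp a \<le> exp B * exp a" using assms(1) by (intro mult_right_mono) auto
  also have "\<dots> = exp (B + a)" by (simp add: exp_add)
  also have "\<dots> \<le> y powr r" using assms(2,3) by (simp add: powr_def)
  finally show ?thesis .
qed

section \<open>The lower tail of the hypergeometric distribution\<close>

lemma lower_tail_exponent_ge:
  fixes N d m j :: nat
  assumes "d \<le> N" "m \<le> N" "j < d" "j < m"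
  shows "real d * real m / real N - 2 * real j \<le> (real d - real j) * real (m - j) / (real N - real j)"
proof -
  have "real j * real d \<le> real j * real N" "real j * real m \<le> real j * real N"
    using assms by (intro mult_left_mono; simp)+
  moreover have "(real d - real j) * (real m - real j)
      = real d * real m - real j * real d - real j * real m + real j * real j"
    by (simp add: algebra_simps)
  moreover have "0 \<le> real j * real j" by simp
  ultimately have "real d * real m - 2 * real j * real N \<le> (real d - real j) * (real m - real j)"
    by linarith
  then have "(real d * real m - 2 * real j * real N) / real N \<le> (real d - real j) * real (m - j) / real N"
    using assms by (simp add: of_nat_diff divide_right_mono)
  moreover have "(real d * real m - 2 * real j * real N) / real N = real d * real m / real N - 2 * real j"
    using assms by (simp add: diff_divide_distrib)
  ultimately have "real d * real m / real N - 2 * real j \<le> (real d - real j) * real (m - j) / real N"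
    by simp
  also have "\<dots> \<le> (real d - real j) * real (m - j) / (real N - real j)"
    using assms by (intro divide_left_mono) auto
  finally show ?thesis .
qed

text \<open>Bound on the fraction of \<open>m\<close>-subsets of an \<open>N\<close>-set meeting a fixed \<open>d\<close>-set in exactly \<open>j\<close>
  elements, in terms of the mean \<open>\<mu> = m d / N\<close>.\<close>
lemma lower_tail_term_le:
  fixes N d m j :: nat
  assumes N: "0 < N" "d \<le> N" "m \<le> N" and p: "p = real m / real N" and \<mu>: "\<mu> = p * real d"
    and j: "real j < \<mu>"
  shows "real (d choose j) * p ^ j * ((real N - real d) / (real N - real j)) ^ (m - j)
     \<le> exp (- \<mu>) * (exp 2 * \<mu>) ^ j / fact j"
proof -
  have p01: "0 \<le> p" "p \<le> 1" using N p by auto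
  have "\<mu> \<le> real d" using p01 \<mu> by (simp add: mult_left_le_one_le)
  moreover have "\<mu> \<le> real m"
    using mult_left_le[of "real d / real N" "real m"] N unfolding \<mu> p by simp
  ultimately have jd: "j < d" "j < m" using j by auto
  have binomial: "real (d choose j) * p ^ j \<le> \<mu> ^ j / fact j"
  proof -
    have "real (d choose j) * p ^ j \<le> (real d ^ j / fact j) * p ^ j"
      using p01 by (intro mult_right_mono binomial_le_power_div_fact) auto
    also have "\<dots> = \<mu> ^ j / fact j" using \<mu> by (simp add: power_mult_distrib field_simps)
    finally show ?thesis .
  qed
  define q where "q = (real d - real j) / (real N - real j)"
  have q: "0 \<le> 1 - q" "1 - q \<le> exp (- q)"
    using N jd exp_ge_add_one_self[of "- q"] unfolding q_def by (auto simp: field_simps)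
  have "(1 - q) ^ (m - j) \<le> exp (- q) ^ (m - j)" using q by (intro power_mono)
  also have "\<dots> = exp (- ((real d - real j) * real (m - j) / (real N - real j)))"
    by (simp add: q_def exp_of_nat_mult[symmetric] field_simps)
  also have "\<dots> \<le> exp (2 * real j - \<mu>)"
    using lower_tail_exponent_ge[OF N(2,3) jd] unfolding \<mu> p by (simp add: mult.commute)
  finally have ratio: "(1 - q) ^ (m - j) \<le> exp (2 * real j - \<mu>)" .
  have "(real N - real d) / (real N - real j) = 1 - q" using N jd by (simp add: q_def field_simps)
  moreover have "real (d choose j) * p ^ j * (1 - q) ^ (m - j) \<le> (\<mu> ^ j / fact j) * exp (2 * real j - \<mu>)"
    by (rule mult_mono[OF binomial ratio]) (use j q in auto)
  ultimately have "real (d choose j) * p ^ j * ((real N - real d) / (real N - real j)) ^ (m - j)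
      \<le> (\<mu> ^ j / fact j) * exp (2 * real j - \<mu>)" by simp
  also have "\<dots> = exp (- \<mu>) * (exp 2 * \<mu>) ^ j / fact j"
    by (simp add: power_mult_distrib exp_of_nat_mult[symmetric] exp_add[symmetric] exp_diff field_simps)
  finally show ?thesis .
qed

lemma lower_tail_sum_le:
  fixes N d m :: nat
  assumes N: "0 < N" "d \<le> N" "m \<le> N" and p: "p = real m / real N" and \<mu>: "\<mu> = p * real d"
    and \<mu>0: "0 < \<mu>"
  shows "(\<Sum>j<nat \<lceil>\<mu> / 120\<rceil>. real (d choose j) * p ^ j * ((real N - real d) / (real N - real j)) ^ (m - j))
     \<le> exp (- (93/100) * \<mu>)"
proof -
  define \<Lambda> a where "\<Lambda> = \<mu> / 120" and "a = 120 * exp (2::real)"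
  have a: "1 \<le> a" unfolding a_def using exp_ge_add_one_self[of 2] by simp
  have \<Lambda>: "0 \<le> \<Lambda>" using \<mu>0 \<Lambda>_def by simp
  have "(\<Sum>j<nat \<lceil>\<Lambda>\<rceil>. real (d choose j) * p ^ j * ((real N - real d) / (real N - real j)) ^ (m - j))
      \<le> (\<Sum>j<nat \<lceil>\<Lambda>\<rceil>. exp (- \<mu>) * a powr \<Lambda> * (\<Lambda> ^ j / fact j))"
  proof (rule sum_mono)
    fix j assume "j \<in> {..<nat \<lceil>\<Lambda>\<rceil>}"
    then have "j < nat \<lceil>\<Lambda>\<rceil>" by simp
    then have j: "real j < \<Lambda>" by linarith
    \<comment> \<open>Since \<open>j < \<Lambda>\<close>, the factor \<open>a ^ j\<close> is dominated by \<open>a powr \<Lambda>\<close>, uniformly in \<open>j\<close>.\<close>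
    have "exp 2 * \<mu> = a * \<Lambda>" unfolding a_def \<Lambda>_def by simp
    then have "(exp 2 * \<mu>) ^ j = a ^ j * \<Lambda> ^ j" by (simp only: power_mult_distrib)
    also have "\<dots> \<le> a powr \<Lambda> * \<Lambda> ^ j"
      using a j \<Lambda> by (intro mult_right_mono) (simp_all add: powr_realpow[symmetric] powr_mono)
    finally have "exp (- \<mu>) * (exp 2 * \<mu>) ^ j / fact j \<le> exp (- \<mu>) * (a powr \<Lambda> * \<Lambda> ^ j) / fact j"
      by (intro divide_right_mono mult_left_mono) auto
    then have power: "exp (- \<mu>) * (exp 2 * \<mu>) ^ j / fact j \<le> exp (- \<mu>) * a powr \<Lambda> * (\<Lambda> ^ j / fact j)"
      by simp
    have "real j < \<mu>" using j \<mu>0 \<Lambda>_def by simp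
    from lower_tail_term_le[OF N p \<mu> this] power
    show "real (d choose j) * p ^ j * ((real N - real d) / (real N - real j)) ^ (m - j)
       \<le> exp (- \<mu>) * a powr \<Lambda> * (\<Lambda> ^ j / fact j)"
      by (rule order_trans)
  qed
  also have "\<dots> = exp (- \<mu>) * a powr \<Lambda> * (\<Sum>j<nat \<lceil>\<Lambda>\<rceil>. \<Lambda> ^ j / fact j)"
    by (simp add: sum_distrib_left)
  also have "\<dots> \<le> exp (- \<mu>) * a powr \<Lambda> * exp \<Lambda>"
    using \<Lambda> by (intro mult_left_mono exp_ge_partial_sum) auto
  also have "\<dots> = exp (- \<mu> + \<Lambda> * ln a + \<Lambda>)"
    using a by (simp add: powr_def exp_add[symmetric] mult.commute)
  also have "\<dots> \<le> exp (- (93/100) * \<mu>)"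
  proof -
    have "ln a = ln 120 + 2" unfolding a_def by (simp add: ln_mult)
    with ln_120_le have "\<Lambda> * ln a \<le> \<Lambda> * 7.4" using \<Lambda> by (intro mult_left_mono) auto
    then have "- \<mu> + \<Lambda> * ln a + \<Lambda> \<le> - (93/100) * \<mu>" using \<Lambda>_def by linarith
    then show ?thesis by simp
  qed
  finally show ?thesis unfolding \<Lambda>_def .
qed

section \<open>Graphs, derangements and broken edges\<close>

lemma finite_all_edges: "finite (all_edges n)"
  unfolding all_edges_def by (rule finite_subset[of _ "Pow {0..<n}"]) auto

lemma card_all_edges: "card (all_edges n) = n choose 2"
  unfolding all_edges_def using n_subsets[of "{0..<n}" 2] by simp

lemma finite_graphs_nm: "finite (graphs_nm n m)"
  unfolding graphs_nm_def
  by (rule finite_subset[of _ "Pow (all_edges n)"]) (auto simp: finite_all_edges)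

lemma card_graphs_nm: "card (graphs_nm n m) = (n choose 2) choose m"
  unfolding graphs_nm_def using n_subsets[OF finite_all_edges] by (simp add: card_all_edges)

lemma prob_Gnm_ge:
  assumes bad: "real (card {E \<in> graphs_nm n m. \<not> P E}) \<le> q * real (card (graphs_nm n m))"
    and m: "m \<le> n choose 2"
  shows "1 - q \<le> prob_Gnm n m P"
proof -
  have pos: "0 < real (card (graphs_nm n m))" using m by (simp add: card_graphs_nm)
  have "card ({E \<in> graphs_nm n m. P E} \<union> {E \<in> graphs_nm n m. \<not> P E})
        = card {E \<in> graphs_nm n m. P E} + card {E \<in> graphs_nm n m. \<not> P E}"
    using finite_graphs_nm[of n m] by (intro card_Un_disjoint) auto
  moreover have "{E \<in> graphs_nm n m. P E} \<union> {E \<in> graphs_nm n m. \<not> P E} = graphs_nm n m" by auto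
  ultimately have "card {E \<in> graphs_nm n m. P E} + card {E \<in> graphs_nm n m. \<not> P E} = card (graphs_nm n m)"
    by simp
  then show ?thesis using bad pos unfolding prob_Gnm_def by (simp add: field_simps flip: of_nat_add)
qed

lemma edges_le_choose_two:
  assumes "100 \<le> real n" "real m = c * real n" "c \<le> real n / 10^10"
  shows "m \<le> n choose 2"
proof -
  have "real m \<le> real n * real n / 10^10" using assms by (simp add: field_simps mult_right_mono)
  also have "\<dots> \<le> real (n choose 2)" using assms(1) by (simp add: real_choose_two field_simps)
  finally show ?thesis by simp
qed

definition edges_meeting :: "nat \<Rightarrow> nat set \<Rightarrow> nat set set" where
  "edges_meeting n S = {e \<in> all_edges n. e \<inter> S \<noteq> {}}"

lemma edges_meeting_subset: "edges_meeting n S \<subseteq> all_edges n"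
  unfolding edges_meeting_def by auto

lemma card_edges_meeting:
  assumes "S \<subseteq> {0..<n}"
  shows "card (edges_meeting n S) = (n choose 2) - ((n - card S) choose 2)"
proof -
  have "all_edges n - edges_meeting n S = {e. e \<subseteq> {0..<n} - S \<and> card e = 2}"
    unfolding edges_meeting_def all_edges_def by auto
  then have "card (all_edges n - edges_meeting n S) = (n - card S) choose 2"
    using n_subsets[of "{0..<n} - S" 2] assms by (simp add: card_Diff_subset finite_subset)
  moreover have "finite (edges_meeting n S)"
    using finite_subset[OF edges_meeting_subset finite_all_edges] .
  ultimately have "card (all_edges n) - card (edges_meeting n S) = (n - card S) choose 2"
    by (simp add: card_Diff_subset edges_meeting_subset)
  then show ?thesis
    using card_mono[OF finite_all_edges edges_meeting_subset[of n S]] card_all_edges[of n] by arith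
qed

lemma real_card_edges_meeting:
  assumes "k \<le> n"
  shows "real ((n choose 2) - ((n - k) choose 2)) = real k * (2 * real n - real k - 1) / 2"
proof -
  have "(n - k) choose 2 \<le> n choose 2" by (rule binomial_right_mono) simp
  then have "real ((n choose 2) - ((n - k) choose 2)) = real (n choose 2) - real ((n - k) choose 2)"
    by (simp add: of_nat_diff)
  also have "\<dots> = real k * (2 * real n - real k - 1) / 2"
    using assms by (simp add: real_choose_two of_nat_diff field_simps)
  finally show ?thesis .
qed

lemma edge_probability_eq:
  assumes "2 \<le> n" "real m = c * real n"
  shows "real m / real (n choose 2) = 2 * c / (real n - 1)"
  using assms by (simp add: real_choose_two field_simps)

lemma expected_edges_meeting_ge:
  assumes n: "100 \<le> real n" and k: "k \<le> n" and m: "real m = c * real n" and c: "0 \<le> c"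
  defines "\<mu> \<equiv> real m / real (n choose 2) * real ((n choose 2) - ((n - k) choose 2))"
  shows "c * real k \<le> \<mu>" and "real k \<le> real n / 20 \<Longrightarrow> 39/20 * c * real k \<le> \<mu>"
proof -
  define r where "r = (2 * real n - real k - 1) / (real n - 1)"
  have p: "real m / real (n choose 2) = 2 * c / (real n - 1)"
    using n m by (intro edge_probability_eq) auto
  have \<mu>_eq: "\<mu> = c * real k * r"
    using n k unfolding \<mu>_def r_def p real_card_edges_meeting[OF k] by (simp add: field_simps)
  have ck: "0 \<le> c * real k" using c by simp
  have "1 \<le> r" using k n unfolding r_def by (simp add: field_simps)
  from mult_left_mono[OF this ck] show "c * real k \<le> \<mu>" unfolding \<mu>_eq by simp
  assume "real k \<le> real n / 20"
  then have "39/20 \<le> r" using n unfolding r_def by (simp add: field_simps)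
  from mult_left_mono[OF this ck] show "39/20 * c * real k \<le> \<mu>" unfolding \<mu>_eq by simp
qed

definition derangements :: "'a set \<Rightarrow> ('a \<Rightarrow> 'a) set" where
  "derangements S = {\<pi>. \<pi> permutes S \<and> (\<forall>x\<in>S. \<pi> x \<noteq> x)}"

lemma finite_derangements: "finite S \<Longrightarrow> finite (derangements S)"
  unfolding derangements_def by (rule finite_subset[OF _ finite_permutations]) auto

lemma card_derangements_le:
  assumes "finite S"
  shows "card (derangements S) \<le> fact (card S)"
proof -
  have "card (derangements S) \<le> card {\<pi>. \<pi> permutes S}"
    unfolding derangements_def using finite_permutations[OF assms] by (intro card_mono) auto
  also have "\<dots> = fact (card S)" using card_permutations[OF refl assms] .
  finally show ?thesis .
qed

lemma two_le_card_derangement_support: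
  assumes "\<pi> \<in> derangements S" "finite S" "S \<noteq> {}"
  shows "2 \<le> card S"
proof -
  obtain u where u: "u \<in> S" using assms(3) by auto
  have "\<pi> u \<in> S" "\<pi> u \<noteq> u"
    using assms(1) u permutes_in_image[of \<pi> S] unfolding derangements_def by auto
  then have "card {u, \<pi> u} \<le> card S" using u assms(2) by (intro card_mono) auto
  then show ?thesis using \<open>\<pi> u \<noteq> u\<close> by simp
qed

lemma inj_image_derangement: "\<pi> \<in> derangements S \<Longrightarrow> inj (image \<pi>)"
  using permutes_inj[of \<pi> S] unfolding derangements_def by (simp add: inj_on_def inj_image_eq_iff)

lemma card_stable_edges_meeting_le:
  assumes "\<pi> \<in> derangements S" "finite S"
  shows "card {e \<in> edges_meeting n S. \<pi> ` e = e} \<le> card S"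
proof -
  have "{e \<in> edges_meeting n S. \<pi> ` e = e} \<subseteq> (\<lambda>u. {u, \<pi> u}) ` S"
  proof
    fix e assume e: "e \<in> {e \<in> edges_meeting n S. \<pi> ` e = e}"
    then obtain a b where ab: "e = {a, b}" "a \<noteq> b"
      unfolding edges_meeting_def all_edges_def by (auto simp: card_2_iff)
    from e obtain u where u: "u \<in> e" "u \<in> S" unfolding edges_meeting_def by auto
    have "\<pi> u \<in> e" "\<pi> u \<noteq> u" using e u assms(1) unfolding derangements_def by auto
    then have "e = {u, \<pi> u}" using ab u by auto
    then show "e \<in> (\<lambda>u. {u, \<pi> u}) ` S" using u by auto
  qed
  then have "card {e \<in> edges_meeting n S. \<pi> ` e = e} \<le> card ((\<lambda>u. {u, \<pi> u}) ` S)"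
    using assms(2) by (intro card_mono) auto
  also have "\<dots> \<le> card S" using assms(2) by (rule card_image_le)
  finally show ?thesis .
qed

definition broken_edges :: "nat set set \<Rightarrow> (nat \<Rightarrow> nat) \<Rightarrow> nat set set" where
  "broken_edges E \<pi> = {e \<in> E. \<pi> ` e \<notin> E}"

lemma card_broken_edges:
  assumes "finite E"
  shows "card (broken_edges E \<pi>) = card E - card {e \<in> E. \<pi> ` e \<in> E}"
proof -
  have "E = broken_edges E \<pi> \<union> {e \<in> E. \<pi> ` e \<in> E}"
    unfolding broken_edges_def by auto
  then have "card E = card (broken_edges E \<pi>) + card {e \<in> E. \<pi> ` e \<in> E}"
    using assms card_Un_disjoint[of "broken_edges E \<pi>" "{e \<in> E. \<pi> ` e \<in> E}"]
    unfolding broken_edges_def by auto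
  then show ?thesis by simp
qed

lemma not_asymmetric_obtain_derangement:
  assumes "\<not> asymmetric n E \<beta> \<gamma>" "finite E"
  obtains \<pi> S where "S \<subseteq> {0..<n}" "\<pi> \<in> derangements S" "\<beta> * real n \<le> real (card S)"
    "real (card (broken_edges E \<pi>)) \<le> \<gamma> * real (card E)"
proof -
  obtain \<pi> where \<pi>: "\<pi> permutes {0..<n}" "real (card (fixed_points n \<pi>)) \<le> (1 - \<beta>) * real n"
    and aut: "1 - \<gamma> \<le> AUT E \<pi>"
    using assms(1) unfolding asymmetric_def by auto
  define S where "S = {v \<in> {0..<n}. \<pi> v \<noteq> v}"
  have sub: "S \<subseteq> {0..<n}" unfolding S_def by auto
  have der: "\<pi> \<in> derangements S"
    using \<pi>(1) unfolding derangements_def permutes_def S_def by auto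
  have "S \<union> fixed_points n \<pi> = {0..<n}" "S \<inter> fixed_points n \<pi> = {}"
    unfolding S_def fixed_points_def by auto
  then have "card S + card (fixed_points n \<pi>) = n"
    using card_Un_disjoint[of S "fixed_points n \<pi>"] by (simp add: S_def fixed_points_def)
  then have large: "\<beta> * real n \<le> real (card S)" using \<pi>(2) by (simp add: algebra_simps flip: of_nat_add)
  have broken: "real (card (broken_edges E \<pi>)) \<le> \<gamma> * real (card E)"
  proof (cases "card E = 0")
    case True
    then show ?thesis using assms(2) by (simp add: broken_edges_def)
  next
    case False
    have "card {e \<in> E. \<pi> ` e \<in> E} \<le> card E" using assms(2) by (intro card_mono) auto
    moreover have "(1 - \<gamma>) * real (card E) \<le> real (card {e \<in> E. \<pi> ` e \<in> E})"
      using aut False by (simp add: AUT_def field_simps)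
    ultimately show ?thesis
      using card_broken_edges[OF assms(2), of \<pi>] by (simp add: of_nat_diff algebra_simps)
  qed
  show thesis using sub der large broken by (rule that)
qed

text \<open>Discarding the broken edges and the at most \<open>card S\<close> edges fixed by \<open>\<pi>\<close>, the remaining
  edges meeting \<open>S\<close> are moved by \<open>\<pi>\<close> onto edges of \<open>E\<close>; a third of them have images disjoint
  from themselves.\<close>
lemma obtain_edges_with_disjoint_images:
  assumes \<pi>: "\<pi> \<in> derangements S" and S: "finite S" and E: "finite E"
    and broken: "card (broken_edges E \<pi>) \<le> b"
    and meeting: "3 * t + card S + b \<le> card (E \<inter> edges_meeting n S)"
  obtains T where "T \<subseteq> edges_meeting n S" "card T = t" "T \<inter> image \<pi> ` T = {}"
    "T \<union> image \<pi> ` T \<subseteq> E"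
proof -
  define P where "P = {e \<in> E \<inter> edges_meeting n S. \<pi> ` e \<in> E \<and> \<pi> ` e \<noteq> e}"
  have fP: "finite P" unfolding P_def using E by auto
  have "E \<inter> edges_meeting n S \<subseteq> P \<union> broken_edges E \<pi> \<union> {e \<in> edges_meeting n S. \<pi> ` e = e}"
    unfolding P_def broken_edges_def by auto
  then have "card (E \<inter> edges_meeting n S)
        \<le> card (P \<union> broken_edges E \<pi> \<union> {e \<in> edges_meeting n S. \<pi> ` e = e})"
    using fP E by (intro card_mono) (auto simp: broken_edges_def edges_meeting_def
        intro: finite_subset[OF _ finite_all_edges])
  also have "\<dots> \<le> card P + card (broken_edges E \<pi>) + card {e \<in> edges_meeting n S. \<pi> ` e = e}"
    by (meson add_mono card_Un_le le_refl order_trans)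
  finally have "3 * t \<le> card P"
    using meeting broken card_stable_edges_meeting_le[OF \<pi> S, of n] by linarith
  moreover obtain I where I: "I \<subseteq> P" "card P \<le> 3 * card I" "\<forall>e\<in>I. \<pi> ` e \<notin> I"
    using large_subset_disjoint_from_image[OF fP inj_image_derangement[OF \<pi>]] P_def by auto
  ultimately have "t \<le> card I" by linarith
  then obtain T where T: "T \<subseteq> I" "card T = t" by (meson obtain_subset_with_card_n)
  show thesis
    by (rule that[of T]) (use T I in \<open>auto simp: P_def\<close>)
qed

lemma card_graphs_nm_superset_le:
  assumes "finite R" "m \<le> n choose 2"
  shows "real (card {E \<in> graphs_nm n m. R \<subseteq> E})
    \<le> (real m / real (n choose 2)) ^ card R * real (card (graphs_nm n m))"
proof -
  have "{E \<in> graphs_nm n m. R \<subseteq> E} = {E. E \<subseteq> all_edges n \<and> card E = m \<and> R \<subseteq> E}"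
    unfolding graphs_nm_def by auto
  then show ?thesis
    using card_subsets_superset_le[OF finite_all_edges, of m n R] assms
    by (simp add: card_all_edges graphs_nm_def)
qed

text \<open>Union bound over the \<open>t\<close>-sets \<open>T\<close> of edges meeting \<open>S\<close> with \<open>T \<inter> \<pi> T = {}\<close>: each
  forces the \<open>2 t\<close> edges of \<open>T \<union> \<pi> T\<close> to be present.\<close>
lemma card_graphs_nm_preserving_le:
  assumes S: "S \<subseteq> {0..<n}" and \<pi>: "\<pi> \<in> derangements S" and m: "m \<le> n choose 2"
  shows "real (card {E \<in> graphs_nm n m. card (broken_edges E \<pi>) \<le> b
                      \<and> 3 * t + card S + b \<le> card (E \<inter> edges_meeting n S)})
    \<le> real (card (edges_meeting n S) choose t) * (real m / real (n choose 2)) ^ (2 * t)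
       * real (card (graphs_nm n m))"
proof -
  define D where "D = edges_meeting n S"
  define Idx where "Idx = {T. T \<subseteq> D \<and> card T = t \<and> T \<inter> image \<pi> ` T = {}}"
  define p where "p = real m / real (n choose 2)"
  have fD: "finite D" unfolding D_def using finite_subset[OF edges_meeting_subset finite_all_edges] .
  have fS: "finite S" using finite_subset[OF S] by simp
  have fIdx: "finite Idx"
    unfolding Idx_def by (rule finite_subset[of _ "Pow D"]) (use fD in auto)
  have covered: "{E \<in> graphs_nm n m. card (broken_edges E \<pi>) \<le> b \<and> 3 * t + card S + b \<le> card (E \<inter> D)}
      \<subseteq> (\<Union>T\<in>Idx. {E \<in> graphs_nm n m. T \<union> image \<pi> ` T \<subseteq> E})"
  proof
    fix E
    assume E: "E \<in> {E \<in> graphs_nm n m. card (broken_edges E \<pi>) \<le> b \<and> 3 * t + card S + b \<le> card (E \<inter> D)}"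
    then have "E \<subseteq> all_edges n" "card (broken_edges E \<pi>) \<le> b"
      "3 * t + card S + b \<le> card (E \<inter> edges_meeting n S)"
      by (auto simp: graphs_nm_def D_def)
    then obtain T where "T \<subseteq> D" "card T = t" "T \<inter> image \<pi> ` T = {}" "T \<union> image \<pi> ` T \<subseteq> E"
      using obtain_edges_with_disjoint_images[OF \<pi> fS finite_subset[OF _ finite_all_edges]]
      unfolding D_def by blast
    then show "E \<in> (\<Union>T\<in>Idx. {E \<in> graphs_nm n m. T \<union> image \<pi> ` T \<subseteq> E})"
      using E unfolding Idx_def by auto
  qed
  have each: "real (card {E \<in> graphs_nm n m. T \<union> image \<pi> ` T \<subseteq> E})
              \<le> p ^ (2 * t) * real (card (graphs_nm n m))" if "T \<in> Idx" for T
  proof -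
    have T: "T \<subseteq> D" "card T = t" "T \<inter> image \<pi> ` T = {}" using that unfolding Idx_def by auto
    have fT: "finite T" using finite_subset[OF T(1) fD] .
    have "card (T \<union> image \<pi> ` T) = 2 * t"
      using T fT card_image[OF inj_on_subset[OF inj_image_derangement[OF \<pi>]]]
      by (simp add: card_Un_disjoint)
    then show ?thesis using card_graphs_nm_superset_le[of "T \<union> image \<pi> ` T" m n] fT m
      by (simp add: p_def)
  qed
  have "card Idx \<le> card {T. T \<subseteq> D \<and> card T = t}"
    unfolding Idx_def using fD by (intro card_mono) auto
  then have card_Idx: "real (card Idx) \<le> real (card D choose t)"
    using fD by (simp add: n_subsets)
  have "real (card {E \<in> graphs_nm n m. card (broken_edges E \<pi>) \<le> b \<and> 3 * t + card S + b \<le> card (E \<inter> D)})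
     \<le> real (card (\<Union>T\<in>Idx. {E \<in> graphs_nm n m. T \<union> image \<pi> ` T \<subseteq> E}))"
  proof (intro of_nat_mono card_mono covered)
    show "finite (\<Union>T\<in>Idx. {E \<in> graphs_nm n m. T \<union> image \<pi> ` T \<subseteq> E})"
      using finite_graphs_nm[of n m] by (rule finite_subset[rotated]) auto
  qed
  also have "\<dots> \<le> (\<Sum>T\<in>Idx. real (card {E \<in> graphs_nm n m. T \<union> image \<pi> ` T \<subseteq> E}))"
    using fIdx by (rule real_card_UN_le)
  also have "\<dots> \<le> (\<Sum>T\<in>Idx. p ^ (2 * t) * real (card (graphs_nm n m)))"
    using each by (rule sum_mono)
  also have "\<dots> = real (card Idx) * (p ^ (2 * t) * real (card (graphs_nm n m)))" by simp
  also have "\<dots> \<le> real (card D choose t) * (p ^ (2 * t) * real (card (graphs_nm n m)))"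
    using card_Idx by (intro mult_right_mono) (auto simp: p_def)
  finally show ?thesis unfolding D_def p_def by (simp only: mult.assoc)
qed

section \<open>Estimates for large \<open>n\<close>\<close>

text \<open>These three inequalities are all that the estimates below need of \<open>n\<close>.\<close>
definition sufficiently_large :: "nat \<Rightarrow> bool" where
  "sufficiently_large n \<longleftrightarrow> 7000 \<le> ln (real n) \<and> 10 * ln (real n) \<le> sqrt (real n) / 900
     \<and> 17 * ln (real n) \<le> 5000 * real n powr (1/30)"

lemma eventually_sufficiently_large: "eventually sufficiently_large sequentially"
  unfolding sufficiently_large_def by (intro eventually_conj; real_asymp)

lemma sufficiently_large_ln_ge: "sufficiently_large n \<Longrightarrow> 7000 \<le> ln (real n)"
  unfolding sufficiently_large_def by simp

lemma sufficiently_large_ge: "sufficiently_large n \<Longrightarrow> 100 \<le> real n"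
  using exp_ge_add_one_self[of "ln (real n)"] sufficiently_large_ln_ge[of n]
  by (cases "n = 0") auto

lemma binomial_le_exp_mult_ln:
  assumes "0 < n"
  shows "real (n choose k) \<le> exp (real k * ln (real n))"
proof -
  have "n choose k \<le> n ^ k" by (cases "k \<le> n") (auto simp: binomial_le_pow binomial_eq_0)
  then have "real (n choose k) \<le> real n ^ k" by (metis of_nat_le_iff of_nat_power)
  then show ?thesis using assms by (simp add: exp_of_nat_mult)
qed

lemma binomial_le_exp_of_large:
  assumes "0 < k" "exp (- c / 6) * real n \<le> real k"
  shows "real (n choose k) \<le> exp (real k * (1 + c / 6))"
proof -
  have "real (n choose k) \<le> (exp 1 * real n / real k) ^ k"
    using assms by (intro binomial_le_exp_ratio_power)
  also have "\<dots> \<le> (exp 1 * exp (c / 6)) ^ k"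
    using assms by (intro power_mono) (auto simp: field_simps exp_minus)
  also have "\<dots> = exp (real k * (1 + c / 6))"
    by (simp add: exp_add[symmetric] exp_of_nat_mult[symmetric])
  finally show ?thesis .
qed

lemma root_le_of_exp_mult_le:
  assumes "0 < n" "c \<le> 29/5 * ln (real n)" "exp (- c / 6) * real n \<le> k"
  shows "real n powr (1/30) \<le> k"
proof -
  have "real n powr (1/30) = exp (- (29/30) * ln (real n) + ln (real n))"
    using assms(1) by (simp add: powr_def algebra_simps)
  also have "\<dots> = exp (- (29/30) * ln (real n)) * real n"
    using assms(1) by (simp only: exp_add exp_ln of_nat_0_less_iff)
  also have "\<dots> \<le> exp (- c / 6) * real n" using assms(2) by (intro mult_right_mono) auto
  finally show ?thesis using assms(3) by linarith
qed

text \<open>The union bound over the \<open>n choose k\<close> supports of size \<open>k\<close> against the lower tail: for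
  \<open>c \<ge> 5.8 ln n\<close> it suffices to bound \<open>n choose k \<le> n ^ k\<close>, otherwise \<open>k \<ge> n powr (1/30)\<close> and
  \<open>n choose k \<le> (e n / k) ^ k \<le> exp (k (1 + c / 6))\<close>.\<close>
lemma binomial_times_lower_tail_le:
  fixes n k :: nat and c \<mu> :: real
  assumes n: "sufficiently_large n" and c: "10^4 \<le> c"
    and k: "2 \<le> k" "exp (- c / 6) * real n \<le> real k"
    and \<mu>: "c * real k \<le> \<mu>" "real k \<le> real n / 20 \<Longrightarrow> 39/20 * c * real k \<le> \<mu>"
  shows "real (n choose k) * exp (- (93/100) * \<mu>) \<le> real n powr (-17)"
proof -
  define L where "L = ln (real n)"
  have L: "7000 \<le> L" "2 * L \<le> real k * L" and n100: "100 \<le> real n"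
    using sufficiently_large_ln_ge[OF n] sufficiently_large_ge[OF n] k
    by (auto simp: L_def intro: mult_right_mono)
  show ?thesis
  proof (cases "29/5 * L \<le> c")
    case True
    then have ck: "29/5 * (real k * L) \<le> c * real k"
      using mult_right_mono[of "29/5 * L" c "real k"] by (simp add: algebra_simps)
    have "real k * L - (93/100) * \<mu> \<le> -17 * L"
    proof (cases "real k \<le> real n / 20")
      case True
      then have "39/20 * (c * real k) \<le> \<mu>" using \<mu>(2) by (simp add: mult.assoc)
      then show ?thesis using ck L by linarith
    next
      case False
      have "100 * L \<le> real n * L" using n100 L by (intro mult_right_mono) auto
      also have "\<dots> \<le> 20 * real k * L" using False L by (intro mult_right_mono) auto
      finally show ?thesis using \<mu>(1) ck L by linarith
    qed
    then have "real k * L + - (93/100) * \<mu> \<le> -17 * ln (real n)" unfolding L_def by simp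
    with binomial_le_exp_mult_ln[of n k] n100 show ?thesis
      unfolding L_def by (intro mult_exp_le_powr[of _ "real k * ln (real n)"]) auto
  next
    case False
    have "real n powr (1/30) \<le> real k"
      using False k n100 by (intro root_le_of_exp_mult_le) (auto simp: L_def)
    have "real k * (1 + c / 6) - (93/100) * \<mu> \<le> real k * (1 + c / 6 - (93/100) * c)"
      using \<mu>(1) by (simp add: algebra_simps)
    also have "\<dots> \<le> real k * (-5000)" using c by (intro mult_left_mono) auto
    also have "\<dots> \<le> real n powr (1/30) * (-5000)" using \<open>real n powr (1/30) \<le> real k\<close> by simp
    also have "\<dots> \<le> -17 * L" using n unfolding sufficiently_large_def L_def by simp
    finally have "real k * (1 + c / 6) + - (93/100) * \<mu> \<le> -17 * ln (real n)" unfolding L_def by simp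
    with binomial_le_exp_of_large[of k c n] k n100 show ?thesis
      by (intro mult_exp_le_powr[of _ "real k * (1 + c / 6)"]) auto
  qed
qed

lemma ln_upper_tail_ratio_le_quarter:
  assumes L: "7000 \<le> ln (real n)" and c: "0 < c" "c \<le> sqrt (real n)"
  shows "ln (20000 * c / real n) \<le> - ln (real n) / 4"
proof -
  have n: "0 < real n" using L by (cases n) auto
  have "ln c \<le> ln (sqrt (real n))" using c n by (subst ln_le_cancel_iff) auto
  then have "ln c \<le> ln (real n) / 2" using n by (simp add: ln_sqrt)
  moreover have "ln (20000 * c / real n) = ln 20000 + ln c - ln (real n)"
    using n c by (simp add: ln_div ln_mult)
  ultimately show ?thesis using ln_20000_le L by linarith
qed

lemma ln_upper_tail_ratio_le_neg_one:
  assumes n: "0 < real n" and c: "0 < c" "c \<le> real n / 10^10"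
  shows "ln (20000 * c / real n) \<le> -1"
proof -
  have "20000 * c / real n \<le> 20000 / 10^10" using c n by (simp add: field_simps)
  also have "\<dots> \<le> exp (-1)" using exp_le by (simp add: exp_minus field_simps)
  finally have "ln (20000 * c / real n) \<le> ln (exp (-1))" using n c by (subst ln_le_cancel_iff) auto
  then show ?thesis by simp
qed

text \<open>If \<open>k < 10\<close>, the support bound \<open>exp (- c / 6) * n \<le> k\<close> forces \<open>c > 6 ln n - 60\<close>.\<close>
lemma upper_tail_exponent_le:
  assumes L: "7000 \<le> ln (real n)" and c: "10^4 \<le> c"
    and k: "2 \<le> k" "exp (- c / 6) * real n \<le> real k" and n: "0 < real n"
  shows "real k * ln (real n) * (1 - c / 3600) \<le> -17 * ln (real n)"
proof (cases "10 \<le> k")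
  case True
  have "10 * ln (real n) \<le> real k * ln (real n)" using True L by (intro mult_right_mono) auto
  then have "real k * ln (real n) * (1 - c / 3600) \<le> 10 * ln (real n) * (1 - c / 3600)"
    by (rule mult_right_mono_neg) (use c in simp)
  also have "\<dots> \<le> -17 * ln (real n)" using L c by (simp add: algebra_simps)
  finally show ?thesis .
next
  case False
  then have "ln (exp (- c / 6) * real n) < ln 10" using k n by (subst ln_less_cancel_iff) auto
  then have "6 * ln (real n) - 60 < c" using ln_le_minus_one[of 10] n by (simp add: ln_mult)
  then have neg: "1 - c / 3600 \<le> -9" using L by linarith
  have "2 * ln (real n) \<le> real k * ln (real n)" using k L by (intro mult_right_mono) auto
  then have "real k * ln (real n) * (1 - c / 3600) \<le> 2 * ln (real n) * (1 - c / 3600)"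
    by (rule mult_right_mono_neg) (use neg in simp)
  also have "\<dots> \<le> -17 * ln (real n)" using L neg mult_left_mono[OF neg, of "2 * ln (real n)"] by linarith
  finally show ?thesis .
qed

text \<open>Since \<open>(n choose k) k! \<le> n ^ k\<close>, this is the union bound over supports and derangements
  against the upper tail.\<close>
lemma power_times_upper_tail_le:
  fixes n k :: nat and c :: real
  assumes n: "sufficiently_large n" and c: "10^4 \<le> c" "c \<le> real n / 10^10"
    and k: "2 \<le> k" "exp (- c / 6) * real n \<le> real k"
  shows "real n ^ k * (20000 * c / real n) powr (c * real k / 900) \<le> real n powr (-17)"
proof -
  define L x where "L = ln (real n)" and "x = 20000 * c / real n"
  have L: "7000 \<le> L" "10 * L \<le> sqrt (real n) / 900" "2 * L \<le> real k * L"
    using n k unfolding sufficiently_large_def L_def by (auto intro: mult_right_mono)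
  have n0: "0 < real n" using sufficiently_large_ge[OF n] by simp
  have ck: "0 \<le> c * real k / 900" using c by simp
  have "real k * L + c * real k / 900 * ln x \<le> -17 * L"
  proof (cases "c \<le> sqrt (real n)")
    case True
    have "c * real k / 900 * ln x \<le> c * real k / 900 * (- L / 4)"
      using ln_upper_tail_ratio_le_quarter[of n c] True c L ck
      unfolding x_def L_def by (intro mult_left_mono) auto
    then have bound: "real k * L + c * real k / 900 * ln x \<le> real k * L * (1 - c / 3600)"
      by (simp add: algebra_simps)
    with upper_tail_exponent_le[OF sufficiently_large_ln_ge[OF n] c(1) k n0] show ?thesis
      unfolding L_def by linarith
  next
    case False
    have "c * real k / 900 * ln x \<le> c * real k / 900 * (-1)"
      using ln_upper_tail_ratio_le_neg_one[OF n0] c ck unfolding x_def by (intro mult_left_mono) auto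
    moreover have "sqrt (real n) * real k \<le> c * real k" using False by (intro mult_right_mono) auto
    ultimately have "real k * L + c * real k / 900 * ln x \<le> real k * (L - sqrt (real n) / 900)"
      by (simp add: algebra_simps)
    also have "\<dots> \<le> real k * (- 9 * L)" using L by (intro mult_left_mono) auto
    also have "\<dots> \<le> 2 * (- 9 * L)" using k L by (intro mult_right_mono_neg) auto
    finally show ?thesis using L by linarith
  qed
  moreover have "real n ^ k * x powr (c * real k / 900) = exp (real k * L + c * real k / 900 * ln x)"
    using n0 c unfolding L_def x_def by (simp add: powr_def exp_add exp_of_nat_mult)
  moreover have "real n powr (-17) = exp (-17 * L)" using n0 by (simp add: powr_def L_def)
  ultimately show ?thesis unfolding x_def by simp
qed

lemma upper_tail_ratio_le:
  assumes n: "100 \<le> real n" and k: "0 < k" "k \<le> n" and m: "real m = c * real n" and c: "0 < c"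
    and t: "c * real k / 900 \<le> real t"
  defines "d \<equiv> real ((n choose 2) - ((n - k) choose 2))" and "p \<equiv> real m / real (n choose 2)"
  shows "exp 1 * d * p^2 / real t \<le> 20000 * c / real n"
proof -
  have d_eq: "d = real k * (2 * real n - real k - 1) / 2"
    using k(2) unfolding d_def by (rule real_card_edges_meeting)
  have "0 \<le> 2 * real n - real k - 1" "2 * real n - real k - 1 \<le> 2 * real n" using k by auto
  then have d: "0 \<le> d" "d \<le> real k * real n"
    unfolding d_eq using mult_left_mono[of "2 * real n - real k - 1" "2 * real n" "real k"] by auto
  have p_eq: "p = 2 * c / (real n - 1)" using n m unfolding p_def by (intro edge_probability_eq) auto
  have p: "0 \<le> p" "p \<le> 8 * c / (3 * real n)"
    unfolding p_eq using n c by (simp_all add: field_simps)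
  have ck: "0 < c * real k" using c k by simp
  have "exp 1 * d * p^2 \<le> 3 * (real k * real n) * (8 * c / (3 * real n))^2"
    using exp_le d p by (intro mult_mono power_mono) auto
  also have "\<dots> = c * real k / 900 * (19200 * c / real n)"
    using n by (simp add: field_simps power2_eq_square)
  finally have "exp 1 * d * p^2 / real t \<le> c * real k / 900 * (19200 * c / real n) / (c * real k / 900)"
    using t ck c d p n by (intro frac_le) auto
  also have "\<dots> \<le> 20000 * c / real n" using ck c n by (simp add: field_simps)
  finally show ?thesis .
qed

lemma succ_times_powr_le:
  assumes "100 \<le> real n"
  shows "(real n + 1) * (2 * real n powr (-17)) \<le> real n powr (-15)"
proof -
  have "100 * real n \<le> real n * real n" using assms by (intro mult_right_mono) auto
  then have "(real n + 1) * 2 \<le> real n * real n" using assms by (simp only: distrib_right)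
  also have "\<dots> = real n powr 2" using assms by (simp add: power2_eq_square)
  finally have "(real n + 1) * 2 * real n powr (-17) \<le> real n powr 2 * real n powr (-17)"
    by (rule mult_right_mono) simp
  also have "\<dots> = real n powr (-15)" using powr_add[of "real n" 2 "-17"] by simp
  finally show ?thesis by (simp only: mult.assoc)
qed

section \<open>Graphs with a sparse derangement of a given support\<close>

lemma card_graphs_nm_few_meeting_le:
  assumes S: "S \<subseteq> {0..<n}" and m: "m \<le> n choose 2"
    and \<mu>: "\<mu> = real m / real (n choose 2) * real (card (edges_meeting n S))" "0 < \<mu>"
  shows "real (card {E \<in> graphs_nm n m. card (E \<inter> edges_meeting n S) < nat \<lceil>\<mu> / 120\<rceil>})
    \<le> exp (- (93/100) * \<mu>) * real (card (graphs_nm n m))"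
proof -
  define N D L where "N = n choose 2" and "D = edges_meeting n S" and "L = nat \<lceil>\<mu> / 120\<rceil>"
  have DN: "card D \<le> N"
    unfolding D_def N_def using card_mono[OF finite_all_edges edges_meeting_subset] card_all_edges by metis
  have N0: "0 < N" using \<mu> unfolding N_def by (cases "n choose 2") auto
  have "{E \<in> graphs_nm n m. card (E \<inter> D) < L} = {E. E \<subseteq> all_edges n \<and> card E = m \<and> card (E \<inter> D) < L}"
    by (auto simp: graphs_nm_def)
  then have "real (card {E \<in> graphs_nm n m. card (E \<inter> D) < L})
    \<le> (\<Sum>j<L. real (card D choose j) * (real m / real N) ^ j
          * ((real N - real (card D)) / (real N - real j)) ^ (m - j)) * real (card (graphs_nm n m))"
    using card_subsets_small_Int_le[OF finite_all_edges edges_meeting_subset, of m n S L] m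
    by (simp add: card_all_edges graphs_nm_def D_def N_def)
  also have "\<dots> \<le> exp (- (93/100) * \<mu>) * real (card (graphs_nm n m))"
    using lower_tail_sum_le[OF N0 DN, of m "real m / real N" \<mu>] m \<mu>
    by (intro mult_right_mono) (auto simp: L_def N_def D_def)
  finally show ?thesis unfolding D_def L_def .
qed

lemma card_graphs_nm_derangement_preserving_le:
  assumes S: "S \<subseteq> {0..<n}" and m: "m \<le> n choose 2" and t: "0 < t"
  shows "real (card (\<Union>\<pi>\<in>derangements S. {E \<in> graphs_nm n m. card (broken_edges E \<pi>) \<le> b
                      \<and> 3 * t + card S + b \<le> card (E \<inter> edges_meeting n S)}))
    \<le> fact (card S) * (exp 1 * real (card (edges_meeting n S)) * (real m / real (n choose 2))^2 / real t) ^ t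
       * real (card (graphs_nm n m))"
proof -
  define d p where "d = card (edges_meeting n S)" and "p = real m / real (n choose 2)"
  have fS: "finite S" using finite_subset[OF S] by simp
  have "real (card (\<Union>\<pi>\<in>derangements S. {E \<in> graphs_nm n m. card (broken_edges E \<pi>) \<le> b
                      \<and> 3 * t + card S + b \<le> card (E \<inter> edges_meeting n S)}))
     \<le> (\<Sum>\<pi>\<in>derangements S. real (card {E \<in> graphs_nm n m. card (broken_edges E \<pi>) \<le> b
                      \<and> 3 * t + card S + b \<le> card (E \<inter> edges_meeting n S)}))"
    using finite_derangements[OF fS] by (rule real_card_UN_le)
  also have "\<dots> \<le> (\<Sum>\<pi>\<in>derangements S. real (d choose t) * p ^ (2 * t) * real (card (graphs_nm n m)))"
    using card_graphs_nm_preserving_le[OF S _ m] unfolding d_def p_def by (intro sum_mono) auto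
  also have "\<dots> = real (card (derangements S)) * (real (d choose t) * p ^ (2 * t)) * real (card (graphs_nm n m))"
    by simp
  also have "\<dots> \<le> fact (card S) * (exp 1 * real d * p^2 / real t) ^ t * real (card (graphs_nm n m))"
  proof (intro mult_right_mono mult_mono)
    show "real (card (derangements S)) \<le> fact (card S)"
      using card_derangements_le[OF fS] by (metis of_nat_fact of_nat_le_iff)
    show "real (d choose t) * p ^ (2 * t) \<le> (exp 1 * real d * p^2 / real t) ^ t"
      using t by (rule binomial_times_power_le)
  qed auto
  finally show ?thesis unfolding d_def p_def .
qed

text \<open>The thresholds \<open>c k / 900\<close>, \<open>c k / 240\<close> and \<open>\<mu> / 120\<close> are chosen so that
  \<open>3 (c k / 900 + 1) + k + c k / 240 \<le> c k / 120\<close> once \<open>c \<ge> 10^4\<close>.\<close>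
lemma support_budget_le:
  assumes c: "10^4 \<le> c" and k: "1 \<le> k" and \<mu>: "c * real k \<le> \<mu>"
  shows "3 * nat \<lceil>c * real k / 900\<rceil> + k + nat \<lfloor>c * real k / 240\<rfloor> \<le> nat \<lceil>\<mu> / 120\<rceil>"
proof -
  have ck: "10000 * real k \<le> c * real k" using c by (intro mult_right_mono) auto
  then have "real (nat \<lceil>c * real k / 900\<rceil>) \<le> c * real k / 900 + 1"
    "real (nat \<lfloor>c * real k / 240\<rfloor>) \<le> c * real k / 240" "\<mu> / 120 \<le> real (nat \<lceil>\<mu> / 120\<rceil>)"
    using k by linarith+
  then have "3 * real (nat \<lceil>c * real k / 900\<rceil>) + real k + real (nat \<lfloor>c * real k / 240\<rfloor>)
      \<le> real (nat \<lceil>\<mu> / 120\<rceil>)"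
    using ck k \<mu> by linarith
  then show ?thesis by linarith
qed

text \<open>A graph with a derangement of \<open>S\<close> breaking few edges either has few edges meeting \<open>S\<close>
  (lower tail), or has many edges meeting \<open>S\<close> that the derangement maps into the graph (upper tail).\<close>
lemma card_graphs_nm_derangement_few_broken_le:
  assumes S: "S \<subseteq> {0..<n}" "2 \<le> card S" and m: "m \<le> n choose 2" and c: "10^4 \<le> c"
    and p: "p = real m / real (n choose 2)" and \<mu>: "\<mu> = p * real (card (edges_meeting n S))"
    and \<mu>_ge: "c * real (card S) \<le> \<mu>" and t: "t = nat \<lceil>c * real (card S) / 900\<rceil>"
  shows "real (card {E \<in> graphs_nm n m. \<exists>\<pi>\<in>derangements S.
                        real (card (broken_edges E \<pi>)) \<le> c * real (card S) / 240})
    \<le> (exp (- (93/100) * \<mu>) + fact (card S) * (exp 1 * real (card (edges_meeting n S)) * p^2 / real t) ^ t)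
       * real (card (graphs_nm n m))"
proof -
  define k D where "k = card S" and "D = edges_meeting n S"
  define b L where "b = nat \<lfloor>c * real k / 240\<rfloor>" and "L = nat \<lceil>\<mu> / 120\<rceil>"
  define Few where "Few = {E \<in> graphs_nm n m. card (E \<inter> D) < L}"
  define Many where "Many = (\<Union>\<pi>\<in>derangements S. {E \<in> graphs_nm n m. card (broken_edges E \<pi>) \<le> b
                      \<and> 3 * t + card S + b \<le> card (E \<inter> D)})"
  have ck: "20000 \<le> c * real k" using c S mult_mono[of "10^4" c 2 "real k"] unfolding k_def by simp
  have \<mu>0: "0 < \<mu>" using ck \<mu>_ge unfolding k_def by simp
  have t0: "0 < t" using ck unfolding t k_def by simp
  have budget: "3 * t + k + b \<le> L"
    unfolding t b_def L_def k_def using c S(2) \<mu>_ge by (intro support_budget_le) auto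
  have "{E \<in> graphs_nm n m. \<exists>\<pi>\<in>derangements S. real (card (broken_edges E \<pi>)) \<le> c * real k / 240}
        \<subseteq> Few \<union> Many"
  proof
    fix E assume "E \<in> {E \<in> graphs_nm n m. \<exists>\<pi>\<in>derangements S. real (card (broken_edges E \<pi>)) \<le> c * real k / 240}"
    then obtain \<pi> where "E \<in> graphs_nm n m" "\<pi> \<in> derangements S" "card (broken_edges E \<pi>) \<le> b"
      unfolding b_def by (auto simp: le_nat_floor)
    then show "E \<in> Few \<union> Many"
      using budget unfolding Few_def Many_def k_def by (cases "card (E \<inter> D) < L") auto
  qed
  moreover have "finite (Few \<union> Many)"
    using finite_graphs_nm[of n m] unfolding Few_def Many_def by (rule finite_subset[rotated]) auto
  ultimately have "card {E \<in> graphs_nm n m. \<exists>\<pi>\<in>derangements S.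
                         real (card (broken_edges E \<pi>)) \<le> c * real k / 240} \<le> card (Few \<union> Many)"
    by (rule card_mono[rotated])
  then have "real (card {E \<in> graphs_nm n m. \<exists>\<pi>\<in>derangements S.
                             real (card (broken_edges E \<pi>)) \<le> c * real k / 240})
      \<le> real (card (Few \<union> Many))"
    by simp
  also have "\<dots> \<le> real (card Few) + real (card Many)"
    using card_Un_le[of Few Many] by linarith
  also have "\<dots> \<le> exp (- (93/100) * \<mu>) * real (card (graphs_nm n m))
      + fact k * (exp 1 * real (card D) * p^2 / real t) ^ t * real (card (graphs_nm n m))"
    using card_graphs_nm_few_meeting_le[OF S(1) m _ \<mu>0] card_graphs_nm_derangement_preserving_le[OF S(1) m t0]
    unfolding Few_def Many_def L_def D_def k_def p \<mu> by (intro add_mono) auto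
  finally show ?thesis unfolding k_def D_def by (simp add: algebra_simps)
qed

text \<open>Failure bound for a single support of size \<open>k\<close>: \<open>p\<close> is the edge density, \<open>d\<close> the number of
  pairs meeting the support, \<open>p * d\<close> the expected number of edges meeting it, and \<open>t\<close> the number of
  preserved edges the upper-tail estimate looks for.\<close>
definition support_failure_bound :: "nat \<Rightarrow> nat \<Rightarrow> real \<Rightarrow> nat \<Rightarrow> real" where
  "support_failure_bound n m c k =
     (let p = real m / real (n choose 2); d = real ((n choose 2) - ((n - k) choose 2));
          t = nat \<lceil>c * real k / 900\<rceil>
      in exp (- (93/100) * (p * d)) + fact k * (exp 1 * d * p^2 / real t) ^ t)"

lemma card_graphs_nm_bad_support_le:
  assumes n: "100 \<le> real n" and S: "S \<subseteq> {0..<n}" "2 \<le> card S"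
    and m: "real m = c * real n" "m \<le> n choose 2" and c: "10^4 \<le> c"
  shows "real (card {E \<in> graphs_nm n m. \<exists>\<pi>\<in>derangements S.
                        real (card (broken_edges E \<pi>)) \<le> c * real (card S) / 240})
    \<le> support_failure_bound n m c (card S) * real (card (graphs_nm n m))"
proof -
  have k: "card S \<le> n" using card_mono[OF _ S(1)] by simp
  have "c * real (card S) \<le> real m / real (n choose 2) * real (card (edges_meeting n S))"
    using expected_edges_meeting_ge(1)[OF n k m(1)] c card_edges_meeting[OF S(1)] by simp
  from card_graphs_nm_derangement_few_broken_le[OF S m(2) c refl refl this refl]
  show ?thesis unfolding support_failure_bound_def Let_def card_edges_meeting[OF S(1)] .
qed

lemma binomial_times_support_failure_bound_le:
  assumes n: "sufficiently_large n" and c: "10^4 \<le> c" "c \<le> real n / 10^10"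
    and m: "real m = c * real n" and k: "2 \<le> k" "k \<le> n" "exp (- c / 6) * real n \<le> real k"
  shows "real (n choose k) * support_failure_bound n m c k \<le> 2 * real n powr (-17)"
proof -
  define p d t where "p = real m / real (n choose 2)"
    and "d = real ((n choose 2) - ((n - k) choose 2))" and "t = nat \<lceil>c * real k / 900\<rceil>"
  define x where "x = 20000 * c / real n"
  have n100: "100 \<le> real n" using sufficiently_large_ge[OF n] .
  have lower: "real (n choose k) * exp (- (93/100) * (p * d)) \<le> real n powr (-17)"
    using expected_edges_meeting_ge[OF n100 k(2) m] c unfolding p_def d_def
    by (intro binomial_times_lower_tail_le[OF n c(1) k(1,3)]) auto
  have t: "c * real k / 900 \<le> real t" unfolding t_def by (rule real_nat_ceiling_ge)
  have base: "0 \<le> exp 1 * d * p^2 / real t" "exp 1 * d * p^2 / real t \<le> x"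
    using upper_tail_ratio_le[OF n100 _ k(2) m _ t] k c
    unfolding p_def d_def x_def by auto
  have x: "0 < x" "x \<le> 1" using c n100 unfolding x_def by (auto simp: field_simps)
  have "(exp 1 * d * p^2 / real t) ^ t \<le> x ^ t" by (rule power_mono[OF base(2,1)])
  also have "\<dots> \<le> x powr (c * real k / 900)" using x t by (simp add: powr_realpow[symmetric] powr_mono')
  finally have power: "(exp 1 * d * p^2 / real t) ^ t \<le> x powr (c * real k / 900)" .
  have "real ((n choose k) * fact k) \<le> real (n ^ k)"
    using binomial_fact_pow[of n k] by (simp only: of_nat_le_iff)
  then have binomial: "real (n choose k) * fact k \<le> real n ^ k" by simp
  have "real (n choose k) * fact k * (exp 1 * d * p^2 / real t) ^ t \<le> real n ^ k * x powr (c * real k / 900)"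
    by (rule mult_mono[OF binomial power]) (use base in auto)
  also have "\<dots> \<le> real n powr (-17)"
    unfolding x_def by (rule power_times_upper_tail_le[OF n c k(1,3)])
  finally have upper: "real (n choose k) * fact k * (exp 1 * d * p^2 / real t) ^ t \<le> real n powr (-17)" .
  have "real (n choose k) * support_failure_bound n m c k
      = real (n choose k) * exp (- (93/100) * (p * d)) + real (n choose k) * fact k * (exp 1 * d * p^2 / real t) ^ t"
    unfolding support_failure_bound_def Let_def p_def d_def t_def by (simp only: distrib_left mult.assoc)
  then show ?thesis using lower upper by linarith
qed

lemma not_asymmetric_obtain_large_derangement:
  assumes n: "0 < n" and E: "E \<in> graphs_nm n m" and m: "real m = c * real n" and c: "0 \<le> c"
    and \<beta>: "max (exp (- c / 6)) (1 / real n) \<le> \<beta>" and not_asym: "\<not> asymmetric n E \<beta> (\<beta> / 240)"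
  obtains \<pi> S where "S \<subseteq> {0..<n}" "2 \<le> card S" "exp (- c / 6) * real n \<le> real (card S)"
    "\<pi> \<in> derangements S" "real (card (broken_edges E \<pi>)) \<le> c * real (card S) / 240"
proof -
  have "finite E" "card E = m"
    using E finite_subset[OF _ finite_all_edges] unfolding graphs_nm_def by auto
  with not_asym obtain \<pi> S where S: "S \<subseteq> {0..<n}" "\<pi> \<in> derangements S" "\<beta> * real n \<le> real (card S)"
    and broken: "real (card (broken_edges E \<pi>)) \<le> \<beta> / 240 * real m"
    by (metis not_asymmetric_obtain_derangement)
  have "exp (- c / 6) * real n \<le> \<beta> * real n" "1 \<le> \<beta> * real n"
    using n \<beta> by (auto simp: field_simps intro: mult_right_mono)
  then have large: "exp (- c / 6) * real n \<le> real (card S)" "S \<noteq> {}" using S(3) by auto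
  have "c * (\<beta> * real n) \<le> c * real (card S)" using S(3) c by (intro mult_left_mono) auto
  then have "real (card (broken_edges E \<pi>)) \<le> c * real (card S) / 240"
    using broken m by (simp add: field_simps)
  moreover have "2 \<le> card S"
    using two_le_card_derangement_support[OF S(2) finite_subset[OF S(1)]] large by simp
  ultimately show thesis using that[of S \<pi>] S large by blast
qed

text \<open>Union bound over all supports \<open>S\<close> of a large derangement, grouped by \<open>card S\<close>.\<close>
lemma card_graphs_nm_not_asymmetric_le:
  fixes n m :: nat and c :: real
  assumes n: "sufficiently_large n" and m: "real m = c * real n" and c: "10^4 \<le> c" "c \<le> real n / 10^10"
  shows "real (card {E \<in> graphs_nm n m. \<not> (\<forall>\<beta>. max (exp (- c / 6)) (1 / real n) \<le> \<beta> \<longrightarrow> \<beta> \<le> 1 \<longrightarrow>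
                          asymmetric n E \<beta> (\<beta> / 240))})
    \<le> real n powr (-15) * real (card (graphs_nm n m))"
proof -
  define SS where "SS = {S. S \<subseteq> {0..<n} \<and> 2 \<le> card S \<and> exp (- c / 6) * real n \<le> real (card S)}"
  define Bad where "Bad S = {E \<in> graphs_nm n m. \<exists>\<pi>\<in>derangements S.
                        real (card (broken_edges E \<pi>)) \<le> c * real (card S) / 240}" for S
  have n100: "100 \<le> real n" using sufficiently_large_ge[OF n] .
  have m_le: "m \<le> n choose 2" using n100 m c(2) by (rule edges_le_choose_two)
  have fSS: "finite SS" unfolding SS_def by (rule finite_subset[of _ "Pow {0..<n}"]) auto
  have "{E \<in> graphs_nm n m. \<not> (\<forall>\<beta>. max (exp (- c / 6)) (1 / real n) \<le> \<beta> \<longrightarrow> \<beta> \<le> 1 \<longrightarrow>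
                          asymmetric n E \<beta> (\<beta> / 240))} \<subseteq> (\<Union>S\<in>SS. Bad S)"
  proof
    fix E assume "E \<in> {E \<in> graphs_nm n m. \<not> (\<forall>\<beta>. max (exp (- c / 6)) (1 / real n) \<le> \<beta> \<longrightarrow>
                          \<beta> \<le> 1 \<longrightarrow> asymmetric n E \<beta> (\<beta> / 240))}"
    then obtain \<beta> where E: "E \<in> graphs_nm n m" and \<beta>: "max (exp (- c / 6)) (1 / real n) \<le> \<beta>"
      and not_asym: "\<not> asymmetric n E \<beta> (\<beta> / 240)" by auto
    have "0 < n" "0 \<le> c" using n100 c by auto
    then obtain \<pi> S where "S \<subseteq> {0..<n}" "2 \<le> card S" "exp (- c / 6) * real n \<le> real (card S)"
      "\<pi> \<in> derangements S" "real (card (broken_edges E \<pi>)) \<le> c * real (card S) / 240"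
      by (rule not_asymmetric_obtain_large_derangement[OF _ E m _ \<beta> not_asym])
    then have "S \<in> SS" "E \<in> Bad S" unfolding SS_def Bad_def using E by auto
    then show "E \<in> (\<Union>S\<in>SS. Bad S)" by blast
  qed
  then have "real (card {E \<in> graphs_nm n m. \<not> (\<forall>\<beta>. max (exp (- c / 6)) (1 / real n) \<le> \<beta> \<longrightarrow>
                          \<beta> \<le> 1 \<longrightarrow> asymmetric n E \<beta> (\<beta> / 240))})
      \<le> real (card (\<Union>S\<in>SS. Bad S))"
    using fSS finite_graphs_nm[of n m] unfolding Bad_def by (intro of_nat_mono card_mono) auto
  also have "\<dots> \<le> (\<Sum>S\<in>SS. real (card (Bad S)))" using fSS by (rule real_card_UN_le)
  also have "\<dots> \<le> (\<Sum>S\<in>SS. support_failure_bound n m c (card S) * real (card (graphs_nm n m)))"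
    using card_graphs_nm_bad_support_le[OF n100 _ _ m m_le c(1)] unfolding SS_def Bad_def
    by (intro sum_mono) auto
  also have "\<dots> = (\<Sum>S\<in>SS. support_failure_bound n m c (card S)) * real (card (graphs_nm n m))"
    by (simp add: sum_distrib_right)
  also have "\<dots> \<le> ((real n + 1) * (2 * real n powr (-17))) * real (card (graphs_nm n m))"
  proof (intro mult_right_mono sum_subsets_by_card_le)
    fix S assume "S \<in> SS"
    then show "real (n choose card S) * support_failure_bound n m c (card S) \<le> 2 * real n powr (-17)"
      unfolding SS_def using card_mono[of "{0..<n}" S]
      by (intro binomial_times_support_failure_bound_le[OF n c m]) auto
    show "0 \<le> support_failure_bound n m c (card S)"
      unfolding support_failure_bound_def Let_def by simp
  qed (auto simp: SS_def)
  also have "\<dots> \<le> real n powr (-15) * real (card (graphs_nm n m))"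
    using succ_times_powr_le[OF n100] by (rule mult_right_mono) simp
  finally show ?thesis .
qed

theorem theorem1p4:
  shows "\<exists>N::nat. \<forall>n\<ge>N. \<forall>m::nat. \<forall>c::real.
     real m = c * real n \<longrightarrow> 10^4 \<le> c \<longrightarrow> c \<le> real n / 10^10 \<longrightarrow>
     prob_Gnm n m (\<lambda>E. \<forall>\<beta>::real. max (exp (- c / 6)) (1 / real n) \<le> \<beta> \<longrightarrow> \<beta> \<le> 1 \<longrightarrow>
                            asymmetric n E \<beta> (\<beta> / 240))
       \<ge> 1 - real n powr (-15)"
proof -
  obtain N where N: "\<And>n. N \<le> n \<Longrightarrow> sufficiently_large n"
    using eventually_sufficiently_large unfolding eventually_sequentially by blast
  show ?thesis
  proof (intro exI[of _ N] allI impI)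
    fix n m :: nat and c :: real
    assume n: "N \<le> n" and m: "real m = c * real n" and c: "10^4 \<le> c" "c \<le> real n / 10^10"
    have "m \<le> n choose 2" using sufficiently_large_ge[OF N[OF n]] m c(2) by (rule edges_le_choose_two)
    with card_graphs_nm_not_asymmetric_le[OF N[OF n] m c]
    show "prob_Gnm n m (\<lambda>E. \<forall>\<beta>::real. max (exp (- c / 6)) (1 / real n) \<le> \<beta> \<longrightarrow> \<beta> \<le> 1 \<longrightarrow>
                                asymmetric n E \<beta> (\<beta> / 240)) \<ge> 1 - real n powr (-15)"
      by (rule prob_Gnm_ge)
  qed
qed

end
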